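(* Let $T_9=\mathbf{e}^1_1\otimes(\mathbf{e}^2_1\otimes\mathbf{e}^3_1+\mathbf{e}^2_2\otimes\mathbf{e}^3_3)+\mathbf{e}^1_2\otimes(\mathbf{e}^2_1\otimes\mathbf{e}^3_2+\mathbf{e}^2_2\otimes\mathbf{e}^3_4)\in\mathbb{C}^2\otimes\mathbb{C}^2\otimes\mathbb{C}^4$ and let $f(\mathbf{x},\mathbf{y},\mathbf{z})=x_1y_1z_1+x_2y_1z_2+x_1y_2z_3+x_2y_2z_4$ for $\mathbf{x},\mathbf{y}\in\mathbb{C}^2,\mathbf{z}\in\mathbb{C}^4$. Let $T\in\mathbb{C}^2\otimes\mathbb{C}^2\otimes\mathbb{C}^4$ and $(A,B,C)\in\mathrm{GL}_2\times\mathrm{GL}_2\times\mathrm{GL}_4$ with $(A,B,C)\cdot T=T_9$. Then a rank-one tensor $\mathbf{a}\otimes\mathbf{b}\otimes\mathbf{c}$ lies in the forbidden locus of $T$ if and only if $f(A\mathbf{a},B\mathbf{b},C\mathbf{c})=0$ (equivalently $\langle (A^T\otimes B^T\otimes C^T)\cdot T_9^*,\mathbf{a}\otimes\mathbf{b}\otimes\mathbf{c}\rangle=0$, where $T_9^*$ is $T_9$ written in the dual basis).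
   Context: $\mathbf{e}^i_j$ denotes the $j$-th standard basis vector of the $i$-th factor. The group $\mathrm{GL}_{n_1}\times\mathrm{GL}_{n_2}\times\mathrm{GL}_{n_3}$ acts by $(A,B,C)\cdot(\mathbf{a}\otimes\mathbf{b}\otimes\mathbf{c})=A\mathbf{a}\otimes B\mathbf{b}\otimes C\mathbf{c}$, extended linearly. The rank of a tensor is the minimal number of rank-one tensors summing to it. A rank-one tensor $P$ is in the forbidden locus of $T$ if $\mathrm{rk}(T-\lambda P)\ge\mathrm{rk}(T)$ for all $\lambda\in\mathbb{C}$. (Here $\mathrm{rk}(T)=4$.) *)

theory Defs
  imports "HOL-Analysis.Analysis"
begin

text \<open>Tensors in C^n1 (x) C^n2 (x) C^n3 are represented as elements of
  complex^'c^'b^'a, with entry T $ i $ j $ k (i indexes the first factor).\<close>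

definition outer3 :: "complex^'a \<Rightarrow> complex^'b \<Rightarrow> complex^'c \<Rightarrow> complex^'c^'b^'a" where
  "outer3 a b c = (\<chi> i j k. a $ i * b $ j * c $ k)"

definition tensor_rank :: "complex^'c^'b^'a \<Rightarrow> nat" where
  "tensor_rank T = (LEAST r. \<exists>a b c. T = (\<Sum>l<r. outer3 (a l) (b l) (c l)))"

text \<open>Action of GL x GL x GL: (A,B,C).(a (x) b (x) c) = Aa (x) Bb (x) Cc, extended linearly.\<close>
definition tensor_act ::
  "complex^'a^'a \<Rightarrow> complex^'b^'b \<Rightarrow> complex^'c^'c \<Rightarrow> complex^'c^'b^'a \<Rightarrow> complex^'c^'b^'a" where
  "tensor_act A B C T = (\<chi> i j k. \<Sum>i'\<in>UNIV. \<Sum>j'\<in>UNIV. \<Sum>k'\<in>UNIV.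
      A $ i $ i' * B $ j $ j' * C $ k $ k' * T $ i' $ j' $ k')"

definition scale3 :: "complex \<Rightarrow> complex^'c^'b^'a \<Rightarrow> complex^'c^'b^'a" where
  "scale3 s P = (\<chi> i j k. s * P $ i $ j $ k)"

definition forbidden_locus :: "complex^'c^'b^'a \<Rightarrow> (complex^'c^'b^'a) set" where
  "forbidden_locus T = {P. tensor_rank P = 1 \<and>
      (\<forall>s::complex. tensor_rank (T - scale3 s P) \<ge> tensor_rank T)}"

text \<open>The tensor T_9 in C^2 (x) C^2 (x) C^4; basis vector e_j is axis (j-1) 1.\<close>
definition T9 :: "complex^4^2^2" where
  "T9 = outer3 (axis 0 1) (axis 0 1) (axis 0 1) + outer3 (axis 0 1) (axis 1 1) (axis 2 1)
      + outer3 (axis 1 1) (axis 0 1) (axis 1 1) + outer3 (axis 1 1) (axis 1 1) (axis 3 1)"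

definition f9 :: "complex^2 \<Rightarrow> complex^2 \<Rightarrow> complex^4 \<Rightarrow> complex" where
  "f9 x y z = x$0 * y$0 * z$0 + x$1 * y$0 * z$1 + x$0 * y$1 * z$2 + x$1 * y$1 * z$3"

end

theory Submission
  imports Defs
begin

text \<open>Since the action of \<open>GL\<^sub>2 \<times> GL\<^sub>2 \<times> GL\<^sub>4\<close> preserves tensor rank, it suffices to study
  \<open>T\<^sub>9 - s (a \<otimes> b \<otimes> c)\<close>. Contracting it with \<open>z \<in> \<complex>\<^sup>4\<close> in the third factor and reading the
  result through \<open>\<complex>\<^sup>2 \<otimes> \<complex>\<^sup>2 \<cong> \<complex>\<^sup>4\<close> gives \<open>z - s \<langle>c, z\<rangle> a \<otimes> b\<close>, which is injective in \<open>z\<close>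
  unless \<open>s f\<^sub>9(a, b, c) = 1\<close>; a decomposition into three rank-one terms would give this
  flattening a kernel, so then the rank is at least 4. If \<open>s f\<^sub>9(a, b, c) = 1\<close>, write \<open>T\<^sub>9\<close> in
  bases of \<open>\<complex>\<^sup>2\<close> starting with \<open>a\<close> and \<open>b\<close>: the tensor becomes a sum of four rank-one terms
  one of whose third factors lies in the span of the other three, and these collapse to
  three terms.\<close>

lemma exhaust_2_from_0: fixes i :: 2 shows "i = 0 \<or> i = 1"
proof (induct i)
  case (of_int z)
  then have "z = 0 \<or> z = 1" by fastforce
  then show ?case by auto
qed

lemma exhaust_4_from_0: fixes i :: 4 shows "i = 0 \<or> i = 1 \<or> i = 2 \<or> i = 3"
proof (induct i)
  case (of_int z)
  then have "z = 0 \<or> z = 1 \<or> z = 2 \<or> z = 3" by fastforce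
  then show ?case by auto
qed

lemma forall_2_from_0: "(\<forall>i::2. P i) \<longleftrightarrow> P 0 \<and> P 1"
  by (metis exhaust_2_from_0)

lemma forall_4_from_0: "(\<forall>i::4. P i) \<longleftrightarrow> P 0 \<and> P 1 \<and> P 2 \<and> P 3"
  by (metis exhaust_4_from_0)

lemma UNIV_4_from_0: "(UNIV::4 set) = {0, 1, 2, 3}"
  using exhaust_4_from_0 by auto

lemma sum_UNIV_4_from_0: "sum f (UNIV::4 set) = f 0 + f 1 + f 2 + f 3"
  unfolding UNIV_4_from_0 by (simp add: ac_simps)

definition has_decomposition :: "complex^'c^'b^'a \<Rightarrow> nat \<Rightarrow> bool" where
  "has_decomposition X r \<longleftrightarrow> (\<exists>a b c. X = (\<Sum>l<r. outer3 (a l) (b l) (c l)))"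

lemma outer3_zero_left [simp]: "outer3 0 b c = 0"
  by (simp add: outer3_def vec_eq_iff)

lemma scale3_0 [simp]: "scale3 0 X = 0"
  by (simp add: scale3_def vec_eq_iff)

lemma has_decomposition_mono:
  assumes "has_decomposition X r" and "r \<le> r'"
  shows "has_decomposition X r'"
proof -
  obtain a b c where X: "X = (\<Sum>l<r. outer3 (a l) (b l) (c l))"
    using assms(1) by (auto simp: has_decomposition_def)
  have "(\<Sum>l<r'. outer3 (if l < r then a l else 0) (b l) (c l)) = X"
    unfolding X using assms(2) by (intro sum.mono_neutral_cong_right) auto
  then show ?thesis
    unfolding has_decomposition_def by metis
qed

lemma has_decomposition_add_outer3:
  assumes "has_decomposition X r"
  shows "has_decomposition (X + outer3 a b c) (Suc r)"
proof -
  obtain p q w where X: "X = (\<Sum>l<r. outer3 (p l) (q l) (w l))"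
    using assms by (auto simp: has_decomposition_def)
  have "(\<Sum>l<r. outer3 ((p(r := a)) l) ((q(r := b)) l) ((w(r := c)) l)) = X"
    unfolding X by (rule sum.cong) auto
  then have "X + outer3 a b c = (\<Sum>l<Suc r. outer3 ((p(r := a)) l) ((q(r := b)) l) ((w(r := c)) l))"
    by simp
  then show ?thesis
    unfolding has_decomposition_def by blast
qed

lemma has_decomposition_sum_outer3:
  assumes "finite S"
  shows "has_decomposition (\<Sum>x\<in>S. outer3 (a x) (b x) (c x)) (card S)"
  using assms
proof (induction S rule: finite_induct)
  case empty
  then show ?case by (simp add: has_decomposition_def)
next
  case (insert x S)
  then show ?case
    using has_decomposition_add_outer3[OF insert.IH] by (simp add: add.commute)
qed

lemma sum_outer3_axis:
  "(\<Sum>(i, j, k)\<in>UNIV. outer3 (axis i 1) (axis j 1) (axis k (X $ i $ j $ k))) = X"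
proof -
  have entry: "(case t of (i', j', k') \<Rightarrow> outer3 (axis i' 1) (axis j' 1) (axis k' (X $ i' $ j' $ k'))) $ i $ j $ k
      = (if t = (i, j, k) then X $ i $ j $ k else 0)" for t i j k
    by (cases t) (auto simp: outer3_def axis_def)
  show ?thesis
    by (simp add: vec_eq_iff entry)
qed

lemma has_decomposition_ex: "\<exists>r. has_decomposition X r"
proof -
  let ?a = "\<lambda>(i, j, k). axis i 1" and ?b = "\<lambda>(i, j, k). axis j 1"
    and ?c = "\<lambda>(i, j, k). axis k (X $ i $ j $ k)"
  have "(\<Sum>t\<in>UNIV. outer3 (?a t) (?b t) (?c t)) = X"
    using sum_outer3_axis[of X] by (simp add: split_beta)
  then show ?thesis
    using has_decomposition_sum_outer3[of UNIV ?a ?b ?c] by auto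
qed

lemma tensor_rank_le_iff: "tensor_rank X \<le> r \<longleftrightarrow> has_decomposition X r"
proof
  have "has_decomposition X (tensor_rank X)"
    using has_decomposition_ex[of X] unfolding tensor_rank_def has_decomposition_def
    by (rule LeastI_ex)
  then show "tensor_rank X \<le> r \<Longrightarrow> has_decomposition X r"
    by (rule has_decomposition_mono)
next
  show "has_decomposition X r \<Longrightarrow> tensor_rank X \<le> r"
    unfolding tensor_rank_def has_decomposition_def by (rule Least_le)
qed

lemma tensor_rank_outer3:
  assumes "a \<noteq> 0" and "b \<noteq> 0" and "c \<noteq> 0"
  shows "tensor_rank (outer3 a b c) = 1"
proof -
  obtain i where "a $ i \<noteq> 0" using assms(1) by (auto simp: vec_eq_iff)
  moreover obtain j where "b $ j \<noteq> 0" using assms(2) by (auto simp: vec_eq_iff)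
  moreover obtain k where "c $ k \<noteq> 0" using assms(3) by (auto simp: vec_eq_iff)
  ultimately have "outer3 a b c $ i $ j $ k \<noteq> 0"
    by (simp add: outer3_def)
  then have "outer3 a b c \<noteq> 0"
    by auto
  then have "\<not> tensor_rank (outer3 a b c) \<le> 0"
    unfolding tensor_rank_le_iff has_decomposition_def by simp
  moreover have "tensor_rank (outer3 a b c) \<le> 1"
    unfolding tensor_rank_le_iff has_decomposition_def
    by (intro exI[of _ "\<lambda>_. a"] exI[of _ "\<lambda>_. b"] exI[of _ "\<lambda>_. c"]) simp
  ultimately show ?thesis by simp
qed

lemma tensor_act_outer3: "tensor_act A B C (outer3 a b c) = outer3 (A *v a) (B *v b) (C *v c)"
  unfolding tensor_act_def outer3_def
  by (simp add: vec_eq_iff matrix_vector_mult_def sum_distrib_left sum_distrib_right mult_ac)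

lemma tensor_act_add: "tensor_act A B C (X + Y) = tensor_act A B C X + tensor_act A B C Y"
  unfolding tensor_act_def by (simp add: vec_eq_iff distrib_left sum.distrib)

lemma tensor_act_diff_scale3:
  "tensor_act A B C (X - scale3 s Y) = tensor_act A B C X - scale3 s (tensor_act A B C Y)"
  unfolding tensor_act_def scale3_def
  by (simp add: vec_eq_iff right_diff_distrib sum_subtractf sum_distrib_left mult_ac)

lemma tensor_act_sum_outer3:
  fixes r :: nat
  shows "tensor_act A B C (\<Sum>l<r. outer3 (a l) (b l) (c l))
    = (\<Sum>l<r. outer3 (A *v a l) (B *v b l) (C *v c l))"
proof (induction r)
  case 0
  then show ?case by (simp add: tensor_act_def vec_eq_iff)
next
  case (Suc r)
  then show ?case by (simp add: tensor_act_add tensor_act_outer3)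
qed

lemma has_decomposition_tensor_act:
  assumes "has_decomposition X r"
  shows "has_decomposition (tensor_act A B C X) r"
proof -
  obtain a b c where X: "X = (\<Sum>l<r. outer3 (a l) (b l) (c l))"
    using assms by (auto simp: has_decomposition_def)
  show ?thesis
    unfolding has_decomposition_def X tensor_act_sum_outer3
    by (intro exI[of _ "\<lambda>l. A *v a l"] exI[of _ "\<lambda>l. B *v b l"] exI[of _ "\<lambda>l. C *v c l"]) (rule refl)
qed

lemma tensor_act_tensor_act:
  "tensor_act A B C (tensor_act A' B' C' X) = tensor_act (A ** A') (B ** B') (C ** C') X"
proof -
  obtain r :: nat and a b c where "X = (\<Sum>l<r. outer3 (a l) (b l) (c l))"
    using has_decomposition_ex[of X] unfolding has_decomposition_def by blast
  then show ?thesis by (simp add: tensor_act_sum_outer3 matrix_vector_mul_assoc)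
qed

lemma tensor_act_mat_1: "tensor_act (mat 1) (mat 1) (mat 1) X = X"
proof -
  obtain r :: nat and a b c where "X = (\<Sum>l<r. outer3 (a l) (b l) (c l))"
    using has_decomposition_ex[of X] unfolding has_decomposition_def by blast
  then show ?thesis by (simp add: tensor_act_sum_outer3)
qed

lemma tensor_rank_tensor_act:
  assumes "invertible A" and "invertible B" and "invertible C"
  shows "tensor_rank (tensor_act A B C X) = tensor_rank X"
proof -
  obtain A' B' C' where "A' ** A = mat 1" "B' ** B = mat 1" "C' ** C = mat 1"
    using assms invertible_left_inverse by metis
  then have X: "X = tensor_act A' B' C' (tensor_act A B C X)"
    by (simp add: tensor_act_tensor_act tensor_act_mat_1)
  have le: "tensor_rank (tensor_act P Q R Y) \<le> tensor_rank Y" for P Q R and Y :: "complex^'c^'b^'a"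
    using has_decomposition_tensor_act tensor_rank_le_iff by blast
  show ?thesis
    using le[of A B C X] le[of A' B' C' "tensor_act A B C X"] X by simp
qed

definition contract3 :: "complex^'c^'b^'a \<Rightarrow> complex^'c \<Rightarrow> complex^'b^'a" where
  "contract3 X z = (\<chi> i j. \<Sum>k\<in>UNIV. X $ i $ j $ k * z $ k)"

lemma contract3_sum_outer3_eq_0:
  assumes "\<And>l. l < r \<Longrightarrow> (\<Sum>k\<in>UNIV. c l $ k * z $ k) = 0"
  shows "contract3 (\<Sum>l<r. outer3 (a l) (b l) (c l)) z = 0"
proof -
  have "contract3 (\<Sum>l<r. outer3 (a l) (b l) (c l)) z $ i $ j
      = (\<Sum>k\<in>UNIV. \<Sum>l<r. a l $ i * b l $ j * (c l $ k * z $ k))" for i j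
    by (simp add: contract3_def outer3_def sum_distrib_right mult.assoc)
  also have "\<dots> i j = (\<Sum>l<r. a l $ i * b l $ j * (\<Sum>k\<in>UNIV. c l $ k * z $ k))" for i j
    by (subst sum.swap) (simp add: sum_distrib_left)
  also have "\<dots> i j = 0" for i j
    using assms by simp
  finally show ?thesis
    by (simp add: vec_eq_iff)
qed

lemma exists_nonzero_kernel_if_zero_row:
  fixes M :: "'f::field^'n^'n"
  assumes "row i M = 0"
  obtains z where "z \<noteq> 0" and "M *v z = 0"
proof -
  have "\<not> invertible M"
    using det_zero_row(2)[OF assms] invertible_det_nz by blast
  then show ?thesis
    using that invertible_left_inverse matrix_left_invertible_ker by blast
qed

lemma contract3_nonzero_root_if_has_decomposition_3:
  fixes X :: "complex^4^'b^'a"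
  assumes "has_decomposition X 3"
  obtains z where "z \<noteq> 0" and "contract3 X z = 0"
proof -
  obtain a b w where X: "X = (\<Sum>l<(3::nat). outer3 (a l) (b l) (w l))"
    using assms by (auto simp: has_decomposition_def)
  define M :: "complex^4^4" where
    "M = (\<chi> k. if k = 0 then w 0 else if k = 1 then w 1 else if k = 2 then w 2 else 0)"
  have "row 3 M = 0"
    by (simp add: row_def M_def vec_eq_iff)
  then obtain z where z: "z \<noteq> 0" "M *v z = 0"
    by (rule exists_nonzero_kernel_if_zero_row)
  have "(M *v z) $ 0 = 0" "(M *v z) $ 1 = 0" "(M *v z) $ 2 = 0"
    using z(2) by simp_all
  then have "(\<Sum>k\<in>UNIV. w l $ k * z $ k) = 0" if "l < 3" for l
    using that by (auto simp: matrix_vector_mult_def M_def numeral_3_eq_3 numeral_2_eq_2 less_Suc_eq)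
  then have "contract3 X z = 0"
    unfolding X by (rule contract3_sum_outer3_eq_0)
  with z(1) show ?thesis by (rule that)
qed

lemma contract3_T9_minus_eq_0_imp_eq_0:
  assumes "contract3 (T9 - scale3 s (outer3 a b c)) z = 0" and "s * f9 a b c \<noteq> 1"
  shows "z = 0"
proof -
  define g where "g = c$0 * z$0 + c$1 * z$1 + c$2 * z$2 + c$3 * z$3"
  have entry: "(\<Sum>k\<in>UNIV. (T9 - scale3 s (outer3 a b c)) $ i $ j $ k * z $ k) = 0" for i j
    using assms(1) by (simp add: contract3_def vec_eq_iff)
  have z: "z$0 = s * a$0 * b$0 * g" "z$1 = s * a$1 * b$0 * g"
      "z$2 = s * a$0 * b$1 * g" "z$3 = s * a$1 * b$1 * g"
    using entry[of 0 0] entry[of 1 0] entry[of 0 1] entry[of 1 1]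
    by (simp_all add: sum_UNIV_4_from_0 T9_def outer3_def scale3_def axis_def g_def algebra_simps)
  \<comment> \<open>pairing the four equations with \<open>c\<close> gives \<open>g = s f9(a,b,c) g\<close>\<close>
  have "g = s * f9 a b c * g"
    unfolding f9_def by (subst g_def, simp only: z) (simp add: algebra_simps)
  then have "g = 0"
    using assms(2) by (metis mult_cancel_right2)
  then show "z = 0"
    using z by (simp add: vec_eq_iff forall_4_from_0)
qed

lemma not_has_decomposition_3_T9_minus:
  assumes "s * f9 a b c \<noteq> 1"
  shows "\<not> has_decomposition (T9 - scale3 s (outer3 a b c)) 3"
  using contract3_nonzero_root_if_has_decomposition_3 contract3_T9_minus_eq_0_imp_eq_0 assms by metis

lemma exists_det_one_completion:
  fixes a :: "complex^2"
  assumes "a \<noteq> 0"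
  obtains a' :: "complex^2" where "a$0 * a'$1 - a'$0 * a$1 = 1"
proof (cases "a$0 = 0")
  case True
  with assms have "a$1 \<noteq> 0"
    by (auto simp: vec_eq_iff forall_2_from_0)
  with True show ?thesis
    by (intro that[of "\<chi> i. if i = 0 then - 1 / a$1 else 0"]) simp
next
  case False
  then show ?thesis
    by (intro that[of "\<chi> i. if i = 0 then 0 else 1 / a$0"]) simp
qed

definition kron2 :: "complex^2 \<Rightarrow> complex^2 \<Rightarrow> complex^4" where
  "kron2 x y = (\<chi> k. if k = 0 then x$0 * y$0 else if k = 1 then x$1 * y$0
      else if k = 2 then x$0 * y$1 else x$1 * y$1)"

lemma kron2_nth [simp]:
  "kron2 x y $ 0 = x$0 * y$0" "kron2 x y $ 1 = x$1 * y$0"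
  "kron2 x y $ 2 = x$0 * y$1" "kron2 x y $ 3 = x$1 * y$1"
  by (simp_all add: kron2_def)

lemma T9_adapted_basis:
  fixes a a' b b' :: "complex^2"
  assumes ha: "a$0 * a'$1 - a'$0 * a$1 = 1" and hb: "b$0 * b'$1 - b'$0 * b$1 = 1"
  obtains g11 g12 g21 g22 where
    "T9 = outer3 a b g11 + outer3 a b' g12 + outer3 a' b g21 + outer3 a' b' g22"
    "\<And>z. z = f9 a b z *s g11 + f9 a b' z *s g12 + f9 a' b z *s g21 + f9 a' b' z *s g22"
    "f9 a b g11 = 1"
proof -
  \<comment> \<open>the rows of the inverses of the matrices with columns \<open>a, a'\<close> and \<open>b, b'\<close>\<close>
  define u u' v v' :: "complex^2" where "u = (\<chi> i. if i = 0 then a'$1 else - a'$0)"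
    and "u' = (\<chi> i. if i = 0 then - a$1 else a$0)"
    and "v = (\<chi> i. if i = 0 then b'$1 else - b'$0)"
    and "v' = (\<chi> i. if i = 0 then - b$1 else b$0)"
  note defs = u_def u'_def v_def v'_def
  show ?thesis
  proof (rule that[of "kron2 u v" "kron2 u v'" "kron2 u' v" "kron2 u' v'"])
    show "T9 = outer3 a b (kron2 u v) + outer3 a b' (kron2 u v')
        + outer3 a' b (kron2 u' v) + outer3 a' b' (kron2 u' v')"
      unfolding vec_eq_iff forall_2_from_0 forall_4_from_0
      by (simp add: T9_def outer3_def axis_def defs) (use ha hb in algebra)
    show "z = f9 a b z *s kron2 u v + f9 a b' z *s kron2 u v'
        + f9 a' b z *s kron2 u' v + f9 a' b' z *s kron2 u' v'" for z
      unfolding vec_eq_iff forall_4_from_0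
      by (simp add: f9_def defs) (use ha hb in algebra)
    show "f9 a b (kron2 u v) = 1"
      by (simp add: f9_def defs) (use ha hb in algebra)
  qed
qed

lemma outer3_four_terms_eq_three:
  "outer3 a b (w1 *s h1 + w2 *s h2 + w3 *s h3) + outer3 a b' h2 + outer3 a' b h1 + outer3 a' b' h3
   = outer3 (w1 *s a + a') b (h1 - (w3 + (w1 + 1) * w2) *s h3)
     + outer3 a (w2 *s b + b') (h2 - (w1 + 1) *s h3)
     + outer3 ((w1 + 1) *s a + a') ((w3 + (w1 + 1) * w2) *s b + b') h3"
  unfolding outer3_def by (simp add: vec_eq_iff algebra_simps)

lemma has_decomposition_3_T9_minus:
  assumes "a \<noteq> 0" and "b \<noteq> 0" and hs: "s * f9 a b c = 1"
  shows "has_decomposition (T9 - scale3 s (outer3 a b c)) 3"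
proof -
  obtain a' :: "complex^2" where "a$0 * a'$1 - a'$0 * a$1 = 1"
    using exists_det_one_completion assms(1) by blast
  moreover obtain b' :: "complex^2" where "b$0 * b'$1 - b'$0 * b$1 = 1"
    using exists_det_one_completion assms(2) by blast
  ultimately obtain g11 g12 g21 g22 where T9:
      "T9 = outer3 a b g11 + outer3 a b' g12 + outer3 a' b g21 + outer3 a' b' g22"
    and expand: "\<And>z. z = f9 a b z *s g11 + f9 a b' z *s g12 + f9 a' b z *s g21 + f9 a' b' z *s g22"
    and g11: "f9 a b g11 = 1"
    by (rule T9_adapted_basis) blast
  define w where "w = g11 - s *s c"
  \<comment> \<open>\<open>hs\<close> says exactly that \<open>w\<close> has no \<open>g11\<close>-component\<close>
  have "f9 a b w = 0"
    using g11 hs unfolding w_def f9_def by (simp add: algebra_simps)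
  then have w: "w = f9 a' b w *s g21 + f9 a b' w *s g12 + f9 a' b' w *s g22"
    using expand[of w] by (simp add: algebra_simps)
  have "T9 - scale3 s (outer3 a b c)
      = outer3 a b w + outer3 a b' g12 + outer3 a' b g21 + outer3 a' b' g22"
    unfolding T9 w_def outer3_def scale3_def by (simp add: vec_eq_iff algebra_simps)
  also have "\<dots> = (\<Sum>l<3. outer3 ([f9 a' b w *s a + a', a, (f9 a' b w + 1) *s a + a'] ! l)
      ([b, f9 a b' w *s b + b', (f9 a' b' w + (f9 a' b w + 1) * f9 a b' w) *s b + b'] ! l)
      ([g21 - (f9 a' b' w + (f9 a' b w + 1) * f9 a b' w) *s g22,
        g12 - (f9 a' b w + 1) *s g22, g22] ! l))"
    by (subst w) (simp add: outer3_four_terms_eq_three numeral_3_eq_3)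
  finally show ?thesis
    unfolding has_decomposition_def by blast
qed

lemma tensor_rank_T9_minus_ge_4_iff:
  assumes "a \<noteq> 0" and "b \<noteq> 0"
  shows "4 \<le> tensor_rank (T9 - scale3 s (outer3 a b c)) \<longleftrightarrow> s * f9 a b c \<noteq> 1"
proof -
  have "4 \<le> tensor_rank X \<longleftrightarrow> \<not> has_decomposition X 3" for X :: "complex^4^2^2"
    unfolding tensor_rank_le_iff[symmetric] by arith
  then show ?thesis
    using has_decomposition_3_T9_minus[OF assms] not_has_decomposition_3_T9_minus by blast
qed

lemma tensor_rank_T9: "tensor_rank T9 = 4"
proof -
  have "T9 = (\<Sum>l<4. outer3 ([axis 0 1, axis 0 1, axis 1 1, axis 1 1] ! l)
      ([axis 0 1, axis 1 1, axis 0 1, axis 1 1] ! l) ([axis 0 1, axis 2 1, axis 1 1, axis 3 1] ! l))"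
    by (simp add: T9_def numeral_eq_Suc ac_simps)
  then have "tensor_rank T9 \<le> 4"
    unfolding tensor_rank_le_iff has_decomposition_def by blast
  moreover have "\<not> tensor_rank T9 \<le> 3"
    using not_has_decomposition_3_T9_minus[of 0] by (simp add: tensor_rank_le_iff)
  ultimately show ?thesis by simp
qed

theorem proposition5p1:
  fixes T :: "complex^4^2^2"
    and A :: "complex^2^2" and B :: "complex^2^2" and C :: "complex^4^4"
    and a :: "complex^2" and b :: "complex^2" and c :: "complex^4"
  assumes "invertible A" and "invertible B" and "invertible C"
    and "tensor_act A B C T = T9"
    and "a \<noteq> 0" and "b \<noteq> 0" and "c \<noteq> 0"
  shows "outer3 a b c \<in> forbidden_locus T \<longleftrightarrow> f9 (A *v a) (B *v b) (C *v c) = 0"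
proof -
  let ?P = "outer3 (A *v a) (B *v b) (C *v c)" and ?f = "f9 (A *v a) (B *v b) (C *v c)"
  have Aa: "A *v a \<noteq> 0" and Bb: "B *v b \<noteq> 0"
    using assms(1,2,5,6) invertible_left_inverse matrix_left_invertible_ker by blast+
  have rank_T: "tensor_rank T = 4"
    using tensor_rank_tensor_act[OF assms(1-3), of T] assms(4) tensor_rank_T9 by simp
  have rank_diff: "tensor_rank (T - scale3 s (outer3 a b c)) = tensor_rank (T9 - scale3 s ?P)" for s
    using tensor_rank_tensor_act[OF assms(1-3), of "T - scale3 s (outer3 a b c)"]
    by (simp add: tensor_act_diff_scale3 tensor_act_outer3 assms(4))
  have "outer3 a b c \<in> forbidden_locus T \<longleftrightarrow> (\<forall>s. 4 \<le> tensor_rank (T9 - scale3 s ?P))"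
    by (simp add: forbidden_locus_def tensor_rank_outer3[OF assms(5-7)] rank_T rank_diff)
  also have "\<dots> \<longleftrightarrow> (\<forall>s. s * ?f \<noteq> 1)"
    by (simp add: tensor_rank_T9_minus_ge_4_iff[OF Aa Bb])
  also have "\<dots> \<longleftrightarrow> ?f = 0"
    by (metis left_inverse mult_zero_right zero_neq_one)
  finally show ?thesis .
qed

end
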